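(* Let $\Omega$ be a finite nonempty set, $\mathcal{A}=2^\Omega$, and let $\mu$ be a $q$-measure on $\mathcal{A}$. If $\phi$ and $\psi$ are quadratic coevents on $\mathcal{A}$ that are both 2-generated by $\mu$, then $\phi=\psi$.
   Context: Let $\Omega$ be a finite nonempty set and $\mathcal{A}=2^\Omega$. A coevent is a map $\phi:\mathcal{A}\to\{0,1\}$ with $\phi(\emptyset)=0$. A coevent $\phi$ is quadratic if for all pairwise disjoint $A,B,C\in\mathcal{A}$: $\phi(A\cup B\cup C)=\phi(A\cup B)\oplus\phi(A\cup C)\oplus\phi(B\cup C)\oplus\phi(A)\oplus\phi(B)\oplus\phi(C)$, where $\oplus$ is addition mod 2. For $f:\Omega\to[0,\infty)$ and a coevent $\phi$, the $q$-integral is $\int f\,d\phi=\int_0^\infty \phi(\{\omega\in\Omega: f(\omega)>\lambda\})\,d\lambda$ (Lebesgue measure in $\lambda$), and for $A\in\mathcal{A}$, $\int_A f\,d\phi=\int f\chi_A\,d\phi$. A $q$-measure is a map $\mu:\mathcal{A}\to[0,\infty)$ such that for all pairwise disjoint $A,B,C\in\mathcal{A}$: $\mu(A\cup B\cup C)=\mu(A\cup B)+\mu(A\cup C)+\mu(B\cup C)-\mu(A)-\mu(B)-\mu(C)$. The $q$-measure $\mu$ 2-generates $\phi$ if there is a symmetric function $f:\Omega\times\Omega\to(0,\infty)$ (i.e. $f(\omega,\omega')=f(\omega',\omega)$) such that for all $A\in\mathcal{A}$, $\mu(A)=\int_A g_A\,d\phi$, where $g_A:\Omega\to[0,\infty)$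 is defined by $g_A(\omega')=\int_A f(\cdot,\omega')\,d\phi$ (the $q$-integral over $A$ of $\omega\mapsto f(\omega,\omega')$). *)

theory Defs
  imports "HOL-Analysis.Analysis"
begin

text \<open>Setting: a finite nonempty sample space Omega (a subset of the type 'a);
  the event algebra is Pow Omega.  A coevent is a map from events to {0,1},
  represented as a boolean-valued function (True = 1, False = 0); addition mod 2
  is exclusive or.  Only values on Pow Omega matter.\<close>

definition coevent :: "'a set \<Rightarrow> ('a set \<Rightarrow> bool) \<Rightarrow> bool" where
  "coevent Omega phi \<longleftrightarrow> \<not> phi {}"

definition quadratic_coevent :: "'a set \<Rightarrow> ('a set \<Rightarrow> bool) \<Rightarrow> bool" where
  "quadratic_coevent Omega phi \<longleftrightarrow> coevent Omega phi \<and>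
     (\<forall>A B C. A \<subseteq> Omega \<longrightarrow> B \<subseteq> Omega \<longrightarrow> C \<subseteq> Omega \<longrightarrow>
        A \<inter> B = {} \<longrightarrow> A \<inter> C = {} \<longrightarrow> B \<inter> C = {} \<longrightarrow>
        phi (A \<union> B \<union> C) =
          (phi (A \<union> B) \<noteq> (phi (A \<union> C) \<noteq> (phi (B \<union> C) \<noteq>
            (phi A \<noteq> (phi B \<noteq> phi C))))))"

definition q_integral :: "'a set \<Rightarrow> ('a set \<Rightarrow> bool) \<Rightarrow> ('a \<Rightarrow> real) \<Rightarrow> real" where
  "q_integral Omega phi f =
     (LINT t:{0..}|lborel. (if phi {w \<in> Omega. f w > t} then 1 else 0))"

definition q_integral_on :: "'a set \<Rightarrow> ('a set \<Rightarrow> bool) \<Rightarrow> 'a set \<Rightarrow> ('a \<Rightarrow> real) \<Rightarrow> real" where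
  "q_integral_on Omega phi A f = q_integral Omega phi (\<lambda>w. f w * indicator A w)"

definition q_measure :: "'a set \<Rightarrow> ('a set \<Rightarrow> real) \<Rightarrow> bool" where
  "q_measure Omega mu \<longleftrightarrow>
     (\<forall>A. A \<subseteq> Omega \<longrightarrow> mu A \<ge> 0) \<and>
     (\<forall>A B C. A \<subseteq> Omega \<longrightarrow> B \<subseteq> Omega \<longrightarrow> C \<subseteq> Omega \<longrightarrow>
        A \<inter> B = {} \<longrightarrow> A \<inter> C = {} \<longrightarrow> B \<inter> C = {} \<longrightarrow>
        mu (A \<union> B \<union> C) = mu (A \<union> B) + mu (A \<union> C) + mu (B \<union> C) - mu A - mu B - mu C)"

definition two_generates :: "'a set \<Rightarrow> ('a set \<Rightarrow> real) \<Rightarrow> ('a set \<Rightarrow> bool) \<Rightarrow> bool" where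
  "two_generates Omega mu phi \<longleftrightarrow>
     (\<exists>f :: 'a \<Rightarrow> 'a \<Rightarrow> real.
        (\<forall>w\<in>Omega. \<forall>w'\<in>Omega. f w w' > 0 \<and> f w w' = f w' w) \<and>
        (\<forall>A. A \<subseteq> Omega \<longrightarrow>
           mu A = q_integral_on Omega phi A
                    (\<lambda>w'. q_integral_on Omega phi A (\<lambda>w. f w w'))))"

end

theory Submission
  imports Defs
begin

(* A quadratic coevent is determined by its values on sets with at most
   two elements: the quadratic identity, applied to A = B \<union> {x} \<union> {y}, expresses
   phi A through values on proper subsets of A, so induction on card A applies.
   It therefore suffices to show that mu determines phi on singletons and on pairs.
   On a set with at most two points the q-integral is explicit: for {a,b} and
   0 \<le> h a, h b it equals the "pair value"
      [phi{a,b}] min (h a) (h b) + [phi{a}] (h a - h b)\<^sup>+ + [phi{b}] (h b - h a)\<^sup>+.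
   Hence, if f generates mu from phi, then mu{a} = [phi{a}] f a a, so phi{a} holds
   iff mu{a} > 0; and mu{a,b} is the iterated pair value, from which a case analysis
   recovers phi{a,b} from mu{a}, mu{b}, mu{a,b}, phi{a}, phi{b} alone.  As these data
   are the same for phi and psi, both coevents agree on all small sets, hence
   everywhere. *)

lemma integrable_indicator_Ico: "integrable lborel (indicator {x..<y} :: real \<Rightarrow> real)"
  by (cases "x \<le> y") (auto simp: integrable_indicator_iff)

lemma content_Ico: "Henstock_Kurzweil_Integration.content {x..<y::real} = max (y - x) 0"
  by (cases "x \<le> y") (simp_all add: measure_def)

lemma q_integral_step:
  assumes "\<And>t. t \<ge> 0 \<Longrightarrow> (if phi {w \<in> Omega. h w > t} then 1 else 0 :: real) =
       c1 * indicator {0..<u1} t + c2 * indicator {l2..<u2} t + c3 * indicator {l3..<u3} t"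
    and "0 \<le> l2" "0 \<le> l3"
  shows "q_integral Omega phi h = c1 * max u1 0 + c2 * max (u2 - l2) 0 + c3 * max (u3 - l3) 0"
proof -
  have "(\<lambda>t. indicator {0..} t *\<^sub>R (if phi {w \<in> Omega. h w > t} then 1 else 0 :: real)) =
     (\<lambda>t. c1 * indicator {0..<u1} t + c2 * indicator {l2..<u2} t + c3 * indicator {l3..<u3} t)"
  proof
    fix t :: real
    show "indicator {0..} t *\<^sub>R (if phi {w \<in> Omega. h w > t} then 1 else 0 :: real) =
       c1 * indicator {0..<u1} t + c2 * indicator {l2..<u2} t + c3 * indicator {l3..<u3} t"
      using assms by (cases "t \<ge> 0") (auto simp: indicator_def)
  qed
  then have "q_integral Omega phi h = integral\<^sup>L lborel
     (\<lambda>t. c1 * indicator {0..<u1} t + c2 * indicator {l2..<u2} t + c3 * indicator {l3..<u3} t)"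
    unfolding q_integral_def set_lebesgue_integral_def by simp
  also have "\<dots> = c1 * max u1 0 + c2 * max (u2 - l2) 0 + c3 * max (u3 - l3) 0"
    by (simp add: integrable_indicator_Ico content_Ico)
  finally show ?thesis .
qed

lemma q_integral_on_singleton:
  assumes "a \<in> Omega" "\<not> phi {}"
  shows "q_integral_on Omega phi {a} h = (if phi {a} then max (h a) 0 else 0)"
proof -
  have "q_integral_on Omega phi {a} h =
      (if phi {a} then 1 else 0) * max (h a) 0 + 0 * max (0 - 0) 0 + 0 * max (0 - 0) 0"
    unfolding q_integral_on_def
  proof (rule q_integral_step)
    fix t :: real assume t: "t \<ge> 0"
    have "{w \<in> Omega. h w * indicator {a} w > t} = (if h a > t then {a} else {})"
      using assms t by (auto simp: indicator_def split: if_splits)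
    then show "(if phi {w \<in> Omega. h w * indicator {a} w > t} then 1 else 0 :: real) =
       (if phi {a} then 1 else 0) * indicator {0..<h a} t + 0 * indicator {0..<0} t
       + 0 * indicator {0..<0} t"
      using assms t by (auto simp: indicator_def)
  qed auto
  then show ?thesis by simp
qed

text \<open>The q-integral over a two-point set {a,b} of a function with values x at a and
  y at b, where the coevent takes the values pab, pa, pb on {a,b}, {a}, {b}.\<close>

definition pair_value :: "bool \<Rightarrow> bool \<Rightarrow> bool \<Rightarrow> real \<Rightarrow> real \<Rightarrow> real" where
  "pair_value pab pa pb x y =
     (if pab then min x y else 0) + (if pa then max (x - y) 0 else 0)
     + (if pb then max (y - x) 0 else 0)"

lemma pair_value_nonneg: "0 \<le> x \<Longrightarrow> 0 \<le> y \<Longrightarrow> 0 \<le> pair_value pab pa pb x y"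
  by (simp add: pair_value_def)

lemma q_integral_on_pair:
  assumes "a \<in> Omega" "b \<in> Omega" "a \<noteq> b" "\<not> phi {}" "h a \<ge> 0" "h b \<ge> 0"
  shows "q_integral_on Omega phi {a,b} h = pair_value (phi {a,b}) (phi {a}) (phi {b}) (h a) (h b)"
proof -
  have "q_integral_on Omega phi {a,b} h =
      (if phi {a,b} then 1 else 0) * max (min (h a) (h b)) 0
      + (if phi {a} then 1 else 0) * max (h a - h b) 0
      + (if phi {b} then 1 else 0) * max (h b - h a) 0"
    unfolding q_integral_on_def
  proof (rule q_integral_step)
    fix t :: real assume t: "t \<ge> 0"
    have "{w \<in> Omega. h w * indicator {a,b} w > t} =
        (if h a > t then {a} else {}) \<union> (if h b > t then {b} else {})"
      using assms t by (auto simp: indicator_def split: if_splits)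
    then show "(if phi {w \<in> Omega. h w * indicator {a,b} w > t} then 1 else 0 :: real) =
       (if phi {a,b} then 1 else 0) * indicator {0..<min (h a) (h b)} t
       + (if phi {a} then 1 else 0) * indicator {h b..<h a} t
       + (if phi {b} then 1 else 0) * indicator {h a..<h b} t"
      using assms t by (auto simp: indicator_def insert_commute)
  qed (use assms in auto)
  then show ?thesis using assms by (simp add: pair_value_def)
qed

text \<open>The key computation: for positive x = f a a, y = f b b, z = f a b, the iterated
  pair value (which will be mu{a,b}) together with the masses of the singletons
  decides the value pab of the coevent on the pair.\<close>

lemma pair_value_iterated_decides:
  fixes x y z :: real and pab pa pb :: bool
  assumes "x > 0" "y > 0" "z > 0"
  defines "m \<equiv> pair_value pab pa pb (pair_value pab pa pb x z) (pair_value pab pa pb z y)"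
    and "ma \<equiv> (if pa then x else 0)" and "mb \<equiv> (if pb then y else 0)"
  shows "pab \<longleftrightarrow> (if pa \<and> pb then m \<ge> max ma mb else if pa then m \<ge> ma
                  else if pb then m \<ge> mb else m > 0)"
  using assms by (cases pa; cases pb; cases pab) (auto simp: pair_value_def max_def min_def)

definition two_generates_via ::
    "'a set \<Rightarrow> ('a set \<Rightarrow> real) \<Rightarrow> ('a set \<Rightarrow> bool) \<Rightarrow> ('a \<Rightarrow> 'a \<Rightarrow> real) \<Rightarrow> bool" where
  "two_generates_via Omega mu phi f \<longleftrightarrow>
     (\<forall>w\<in>Omega. \<forall>w'\<in>Omega. f w w' > 0 \<and> f w w' = f w' w) \<and>
     (\<forall>A. A \<subseteq> Omega \<longrightarrow>
        mu A = q_integral_on Omega phi A (\<lambda>w'. q_integral_on Omega phi A (\<lambda>w. f w w')))"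

lemma two_generates_obtain_witness:
  "two_generates Omega mu phi \<Longrightarrow> \<exists>f. two_generates_via Omega mu phi f"
  unfolding two_generates_def two_generates_via_def by blast

lemma two_generates_via_singleton:
  assumes gen: "two_generates_via Omega mu phi f" and "\<not> phi {}" and a: "a \<in> Omega"
  shows "mu {a} = (if phi {a} then f a a else 0)"
proof -
  have pos: "f a a > 0" using gen a unfolding two_generates_via_def by blast
  have "mu {a} = q_integral_on Omega phi {a} (\<lambda>w'. q_integral_on Omega phi {a} (\<lambda>w. f w w'))"
    using gen a unfolding two_generates_via_def by blast
  also have "\<dots> = (if phi {a} then max (q_integral_on Omega phi {a} (\<lambda>w. f w a)) 0 else 0)"
    using q_integral_on_singleton[of a Omega phi, OF a \<open>\<not> phi {}\<close>] by blast
  also have "\<dots> = (if phi {a} then f a a else 0)"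
    using q_integral_on_singleton[of a Omega phi "\<lambda>w. f w a", OF a \<open>\<not> phi {}\<close>] pos by auto
  finally show ?thesis .
qed

lemma two_generates_via_singleton_iff:
  assumes "two_generates_via Omega mu phi f" "\<not> phi {}" "a \<in> Omega"
  shows "phi {a} \<longleftrightarrow> mu {a} > 0"
  using two_generates_via_singleton[OF assms] assms unfolding two_generates_via_def by auto

lemma two_generates_via_pair_iff:
  assumes gen: "two_generates_via Omega mu phi f" and empty: "\<not> phi {}"
    and a: "a \<in> Omega" and b: "b \<in> Omega" and ab: "a \<noteq> b"
  shows "phi {a,b} \<longleftrightarrow> (if phi {a} \<and> phi {b} then mu {a,b} \<ge> max (mu {a}) (mu {b})
     else if phi {a} then mu {a,b} \<ge> mu {a} else if phi {b} then mu {a,b} \<ge> mu {b}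
     else mu {a,b} > 0)"
proof -
  let ?pv = "pair_value (phi {a,b}) (phi {a}) (phi {b})"
  define g where "g w' = q_integral_on Omega phi {a,b} (\<lambda>w. f w w')" for w'
  have pos: "\<And>w w'. w \<in> Omega \<Longrightarrow> w' \<in> Omega \<Longrightarrow> f w w' > 0"
    and sym: "f b a = f a b"
    using gen a b unfolding two_generates_via_def by metis+
  have g: "g w' = ?pv (f a w') (f b w')" if "w' \<in> Omega" for w'
    unfolding g_def using q_integral_on_pair[of a Omega b phi, OF a b ab empty] pos a b that
    by (simp add: less_imp_le)
  have ga: "g a = ?pv (f a a) (f a b)" and gb: "g b = ?pv (f a b) (f b b)"
    using g[OF a] g[OF b] sym by simp_all
  have "mu {a,b} = q_integral_on Omega phi {a,b} g"
    using gen a b unfolding two_generates_via_def g_def by simp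
  also have "\<dots> = ?pv (g a) (g b)"
    using q_integral_on_pair[of a Omega b phi, OF a b ab empty] pair_value_nonneg pos a b
    by (simp add: ga gb less_imp_le)
  finally have "mu {a,b} = ?pv (?pv (f a a) (f a b)) (?pv (f a b) (f b b))"
    by (simp add: ga gb)
  moreover have "mu {a} = (if phi {a} then f a a else 0)" "mu {b} = (if phi {b} then f b b else 0)"
    using two_generates_via_singleton[OF gen empty] a b by blast+
  ultimately show ?thesis
    using pair_value_iterated_decides[OF pos[OF a a] pos[OF b b] pos[OF a b],
        of "phi {a,b}" "phi {a}" "phi {b}"]
    by (simp only:)
qed

lemma two_generated_agree_on_small_sets:
  assumes gen_phi: "two_generates_via Omega mu phi f" and gen_psi: "two_generates_via Omega mu psi g"
    and "\<not> phi {}" "\<not> psi {}" and "finite A" "A \<subseteq> Omega" "card A \<le> 2"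
  shows "phi A = psi A"
proof -
  have singleton: "phi {a} = psi {a}" if "a \<in> Omega" for a
    using two_generates_via_singleton_iff[OF gen_phi _ that]
      two_generates_via_singleton_iff[OF gen_psi _ that] assms(3,4) by simp
  have "card A = 0 \<or> card A = 1 \<or> card A = 2" using \<open>card A \<le> 2\<close> by auto
  then consider "A = {}" | a where "A = {a}" | a b where "A = {a,b}" "a \<noteq> b"
    using \<open>finite A\<close> by (auto simp: card_1_singleton_iff card_2_iff)
  then show ?thesis
  proof cases
    case 1 then show ?thesis using assms(3,4) by simp
  next
    case 2 then show ?thesis using singleton \<open>A \<subseteq> Omega\<close> by simp
  next
    case (3 a b)
    then have "a \<in> Omega" "b \<in> Omega" using \<open>A \<subseteq> Omega\<close> by auto
    then show ?thesis
      using 3 two_generates_via_pair_iff[OF gen_phi assms(3)] two_generates_via_pair_iff[OF gen_psi assms(4)]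
        singleton by simp
  qed
qed

lemma quadratic_coevents_agree:
  assumes fin: "finite Omega"
    and quad_phi: "quadratic_coevent Omega phi" and quad_psi: "quadratic_coevent Omega psi"
    and small: "\<And>A. A \<subseteq> Omega \<Longrightarrow> card A \<le> 2 \<Longrightarrow> phi A = psi A"
    and "A \<subseteq> Omega"
  shows "phi A = psi A"
  using \<open>A \<subseteq> Omega\<close>
proof (induction "card A" arbitrary: A rule: less_induct)
  case less
  show ?case
  proof (cases "card A \<le> 2")
    case True then show ?thesis using small less.prems by blast
  next
    case False
    have finA: "finite A" using fin less.prems finite_subset by blast
    moreover have "\<not> card A \<le> Suc 0" using False by simp
    ultimately obtain x y where xy: "x \<in> A" "y \<in> A" "x \<noteq> y"
      using card_le_Suc0_iff_eq by blast
    define B where "B = A - {x,y}"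
    have A: "A = B \<union> {x} \<union> {y}" and "x \<notin> B" "y \<notin> B" using xy B_def by auto
    have sub: "B \<subseteq> Omega" "{x} \<subseteq> Omega" "{y} \<subseteq> Omega" using less.prems xy B_def by auto
    have disj: "B \<inter> {x} = {}" "B \<inter> {y} = {}" "{x} \<inter> {y} = {}" using B_def xy by auto
    text \<open>Every set in the quadratic identity other than A itself is a proper subset.\<close>
    have proper: "phi C = psi C" if "C \<subset> A" for C
    proof -
      have "card C < card A" using finA that by (rule psubset_card_mono)
      then show ?thesis using less.hyps that less.prems by blast
    qed
    have "{x} \<union> {y} \<noteq> A" using False xy by auto
    then have "B \<union> {x} \<subset> A" "B \<union> {y} \<subset> A" "{x} \<union> {y} \<subset> A" "B \<subset> A" "{x} \<subset> A" "{y} \<subset> A"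
      using A \<open>x \<notin> B\<close> \<open>y \<notin> B\<close> xy by blast+
    then have "phi (B \<union> {x}) = psi (B \<union> {x})" "phi (B \<union> {y}) = psi (B \<union> {y})"
      "phi ({x} \<union> {y}) = psi ({x} \<union> {y})" "phi B = psi B" "phi {x} = psi {x}" "phi {y} = psi {y}"
      by (simp_all add: proper)
    moreover have "phi (B \<union> {x} \<union> {y}) = (phi (B \<union> {x}) \<noteq> (phi (B \<union> {y}) \<noteq>
        (phi ({x} \<union> {y}) \<noteq> (phi B \<noteq> (phi {x} \<noteq> phi {y})))))"
      "psi (B \<union> {x} \<union> {y}) = (psi (B \<union> {x}) \<noteq> (psi (B \<union> {y}) \<noteq>
        (psi ({x} \<union> {y}) \<noteq> (psi B \<noteq> (psi {x} \<noteq> psi {y})))))"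
      using quad_phi quad_psi sub disj unfolding quadratic_coevent_def by blast+
    ultimately show ?thesis using A by simp
  qed
qed

theorem theorem5p3:
  fixes Omega :: "'a set" and mu :: "'a set \<Rightarrow> real" and phi psi :: "'a set \<Rightarrow> bool"
  assumes "finite Omega" and "Omega \<noteq> {}"
    and "q_measure Omega mu"
    and "quadratic_coevent Omega phi" and "quadratic_coevent Omega psi"
    and "two_generates Omega mu phi" and "two_generates Omega mu psi"
  shows "\<forall>A. A \<subseteq> Omega \<longrightarrow> phi A = psi A"
proof -
  obtain f g where gen_phi: "two_generates_via Omega mu phi f"
    and gen_psi: "two_generates_via Omega mu psi g"
    using assms(6,7) two_generates_obtain_witness by metis
  have empty: "\<not> phi {}" "\<not> psi {}"
    using assms(4,5) unfolding quadratic_coevent_def coevent_def by auto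
  have "phi A = psi A" if "A \<subseteq> Omega" "card A \<le> 2" for A
    using two_generated_agree_on_small_sets[OF gen_phi gen_psi empty] that
      finite_subset[OF _ assms(1)] by blast
  then show ?thesis
    using quadratic_coevents_agree[OF assms(1,4,5)] by blast
qed

end
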